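(* Let $X$ be a locally compact Hausdorff space. Then $(\Gamma(X),\tau_{hco})$ is a regular space.
   Context: $\Gamma(X)$ denotes the set of all homeomorphisms $f:\mathrm{dom}(f)\to\mathrm{im}(f)$ between open subsets of $X$ (including the empty function), an inverse semigroup under partial composition. For compact $K\subseteq X$ and open $V\subseteq X$ put $\langle K,V\rangle=\{f\in\Gamma(X): K\subseteq\mathrm{dom}(f),\ f(K)\subseteq V\}$ and $\langle K,V\rangle^{-1}=\{f\in\Gamma(X): K\subseteq\mathrm{im}(f),\ f^{-1}(K)\subseteq V\}$. $CL(X)$ is the set of closed subsets of $X$ (including $\emptyset$) with the Fell topology, generated by the subbasic sets $(X\setminus K)^+=\{A\in CL(X): A\subseteq X\setminus K\}$ ($K$ compact) and $V^-=\{A\in CL(X): A\cap V\neq\emptyset\}$ ($V$ nonempty open). Define $D,I:\Gamma(X)\to CL(X)$ by $D(f)=X\setminus\mathrm{dom}(f)$, $I(f)=X\setminus\mathrm{im}(f)$. The topology $\tau_{hco}$ on $\Gamma(X)$ is generated by all sets $\langle K,V\rangle$, $\langle K,V\rangle^{-1}$, $D^{-1}(W)$ and $I^{-1}(W)$, where $K$ is compact, $V$ open in $X$ and $W$ is Fell-open in $CL(X)$. *)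

theory Defs
  imports "HOL-Analysis.Analysis"
begin

definition Gamma :: "'a topology \<Rightarrow> ('a \<Rightarrow> 'a option) set" where
  "Gamma X = {f. dom f \<subseteq> topspace X \<and> openin X (dom f) \<and> openin X (ran f) \<and>
      homeomorphic_map (subtopology X (dom f)) (subtopology X (ran f)) (\<lambda>x. the (f x))}"

definition pimg :: "('a \<Rightarrow> 'a option) \<Rightarrow> 'a set \<Rightarrow> 'a set" where
  "pimg f K = (\<lambda>x. the (f x)) ` K"

definition ppre :: "('a \<Rightarrow> 'a option) \<Rightarrow> 'a set \<Rightarrow> 'a set" where
  "ppre f K = {x \<in> dom f. the (f x) \<in> K}"

definition CLs :: "'a topology \<Rightarrow> 'a set set" where
  "CLs X = {A. closedin X A}"

definition fell_topology :: "'a topology \<Rightarrow> 'a set topology" where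
  "fell_topology X = topology_generated_by
     ({{A \<in> CLs X. A \<subseteq> topspace X - K} | K. compactin X K} \<union>
      {{A \<in> CLs X. A \<inter> V \<noteq> {}} | V. openin X V \<and> V \<noteq> {}})"

definition Dom_c :: "'a topology \<Rightarrow> ('a \<Rightarrow> 'a option) \<Rightarrow> 'a set" where
  "Dom_c X f = topspace X - dom f"

definition Im_c :: "'a topology \<Rightarrow> ('a \<Rightarrow> 'a option) \<Rightarrow> 'a set" where
  "Im_c X f = topspace X - ran f"

definition hco_subbasis :: "'a topology \<Rightarrow> ('a \<Rightarrow> 'a option) set set" where
  "hco_subbasis X =
     {{f \<in> Gamma X. K \<subseteq> dom f \<and> pimg f K \<subseteq> V} | K V. compactin X K \<and> openin X V} \<union>
     {{f \<in> Gamma X. K \<subseteq> ran f \<and> ppre f K \<subseteq> V} | K V. compactin X K \<and> openin X V} \<union>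
     {{f \<in> Gamma X. Dom_c X f \<in> W} | W. openin (fell_topology X) W} \<union>
     {{f \<in> Gamma X. Im_c X f \<in> W} | W. openin (fell_topology X) W}"

definition hco_topology :: "'a topology \<Rightarrow> ('a \<Rightarrow> 'a option) topology" where
  "hco_topology X = topology_generated_by (hco_subbasis X)"

end

theory Submission
  imports Defs
begin

(* Say that S is closed_nbhds_in T if each point of S has an open neighbourhood whose closure
   lies in S. Such sets are closed under finite intersections and arbitrary unions, so T is
   regular as soon as every subbasic open set has the property.
   For <K,V> and f(K) \<subseteq> V, local compactness gives an open W with f(K) \<subseteq> W \<subseteq> cl W \<subseteq> V and
   an open U \<supseteq> K with compact closure and f(cl U) \<subseteq> W. Then <cl U, W> is a neighbourhood of f,
   and a g outside <K,V> is separated from it by D^-1(U^-) if K is not inside dom g, and by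
   <{x}, X - cl W> if g x \<notin> V. Of the Fell subbasis, D^-1((X - K)^+) is just <K,X>, and
   D^-1(V^-) is separated from every g with V \<subseteq> dom g by <cl U, X>, where U \<subseteq> V is a small
   neighbourhood of a point outside dom f. The sets defined through im f are handled by the
   same argument applied to f^-1. *)

definition closed_nbhds_in :: "'b topology \<Rightarrow> 'b set \<Rightarrow> bool" where
  "closed_nbhds_in T S \<longleftrightarrow> (\<forall>x\<in>S. \<exists>N. openin T N \<and> x \<in> N \<and> T closure_of N \<subseteq> S)"

lemma closed_nbhds_in_empty [simp]: "closed_nbhds_in T {}"
  by (simp add: closed_nbhds_in_def)

lemma closed_nbhds_in_Int:
  assumes "closed_nbhds_in T A" "closed_nbhds_in T B"
  shows "closed_nbhds_in T (A \<inter> B)"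
  unfolding closed_nbhds_in_def
proof
  fix x assume "x \<in> A \<inter> B"
  with assms obtain M N where "openin T M" "x \<in> M" "T closure_of M \<subseteq> A"
      "openin T N" "x \<in> N" "T closure_of N \<subseteq> B"
    unfolding closed_nbhds_in_def by (meson IntD1 IntD2)
  moreover have "T closure_of (M \<inter> N) \<subseteq> T closure_of M \<inter> T closure_of N"
    by (simp add: closure_of_mono)
  ultimately show "\<exists>N. openin T N \<and> x \<in> N \<and> T closure_of N \<subseteq> A \<inter> B"
    by (intro exI[of _ "M \<inter> N"]) blast
qed

lemma closed_nbhds_in_Union:
  assumes "\<And>A. A \<in> \<F> \<Longrightarrow> closed_nbhds_in T A"
  shows "closed_nbhds_in T (\<Union>\<F>)"
  unfolding closed_nbhds_in_def
proof
  fix x assume "x \<in> \<Union>\<F>"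
  then obtain A where "A \<in> \<F>" "x \<in> A"
    by blast
  with assms obtain N where "openin T N" "x \<in> N" "T closure_of N \<subseteq> A"
    unfolding closed_nbhds_in_def by blast
  with \<open>A \<in> \<F>\<close> show "\<exists>N. openin T N \<and> x \<in> N \<and> T closure_of N \<subseteq> \<Union>\<F>"
    by blast
qed

lemma closed_nbhds_in_preimage_generated:
  assumes basis: "\<And>s. s \<in> \<B> \<Longrightarrow> closed_nbhds_in T {x\<in>G. \<phi> x \<in> s}"
    and W: "openin (topology_generated_by \<B>) W"
  shows "closed_nbhds_in T {x\<in>G. \<phi> x \<in> W}"
proof -
  from W have "generate_topology_on \<B> W"
    by (simp add: openin_topology_generated_by_iff)
  then show ?thesis
  proof (induction rule: generate_topology_on.induct)
    case Empty
    then show ?case by simp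
  next
    case (Int a b)
    have "{x\<in>G. \<phi> x \<in> a \<inter> b} = {x\<in>G. \<phi> x \<in> a} \<inter> {x\<in>G. \<phi> x \<in> b}"
      by blast
    with Int.IH show ?case
      by (simp add: closed_nbhds_in_Int)
  next
    case (UN K)
    have "{x\<in>G. \<phi> x \<in> \<Union>K} = (\<Union>k\<in>K. {x\<in>G. \<phi> x \<in> k})"
      by blast
    with UN.IH show ?case
      by (auto intro: closed_nbhds_in_Union)
  next
    case (Basis s)
    then show ?case by (rule basis)
  qed
qed

lemma regular_space_if_closed_nbhds_in:
  assumes "\<And>W. openin T W \<Longrightarrow> closed_nbhds_in T W"
  shows "regular_space T"
  unfolding neighbourhood_base_of_closedin [symmetric] neighbourhood_base_of
proof clarify
  fix W x assume "openin T W" "x \<in> W"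
  with assms obtain N where "openin T N" "x \<in> N" "T closure_of N \<subseteq> W"
    unfolding closed_nbhds_in_def by blast
  then show "\<exists>U V. openin T U \<and> closedin T V \<and> x \<in> U \<and> U \<subseteq> V \<and> V \<subseteq> W"
    by (meson closedin_closure_of closure_of_subset openin_subset)
qed

lemma regular_space_topology_generated_by:
  assumes "\<And>s. s \<in> \<B> \<Longrightarrow> closed_nbhds_in (topology_generated_by \<B>) s"
  shows "regular_space (topology_generated_by \<B>)"
proof (rule regular_space_if_closed_nbhds_in)
  fix W assume "openin (topology_generated_by \<B>) W"
  from closed_nbhds_in_preimage_generated[where G = UNIV and \<phi> = id, OF _ this] assms
  show "closed_nbhds_in (topology_generated_by \<B>) W"
    by simp
qed

lemma closure_of_subsetI:
  assumes "\<And>x. x \<in> topspace T \<Longrightarrow> x \<notin> S \<Longrightarrow> \<exists>M. openin T M \<and> x \<in> M \<and> M \<inter> N = {}"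
  shows "T closure_of N \<subseteq> S"
  using assms closure_of_subset_topspace in_closure_of by fastforce

lemma locally_compact_Hausdorff_compact_closure_nbhd:
  assumes lc: "locally_compact_space X" and H: "Hausdorff_space X"
    and K: "compactin X K" and V: "openin X V" and "K \<subseteq> V"
  obtains W where "openin X W" "K \<subseteq> W" "compactin X (X closure_of W)" "X closure_of W \<subseteq> V"
proof -
  have lcV: "locally_compact_space (subtopology X V)"
    using locally_compact_space_open_subset lc H V by blast
  have HV: "Hausdorff_space (subtopology X V)"
    using Hausdorff_space_subtopology H by blast
  have KV: "compactin (subtopology X V) K"
    using K \<open>K \<subseteq> V\<close> by (simp add: compactin_subtopology)
  obtain U L where UL: "openin (subtopology X V) U" "compactin (subtopology X V) L"
      "K \<subseteq> U" "U \<subseteq> L"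
    using locally_compact_space_compact_closed_compact[of "subtopology X V"] lcV HV KV by blast
  have U: "openin X U"
    using UL(1) V openin_open_subtopology by blast
  have L: "compactin X L" "L \<subseteq> V"
    using UL(2) by (simp_all add: compactin_subtopology)
  have clU: "X closure_of U \<subseteq> L"
    using closure_of_minimal[OF UL(4) compactin_imp_closedin[OF H L(1)]] .
  show thesis
    using that[OF U UL(3) closed_compactin[OF L(1) clU closedin_closure_of]] clU L(2) by blast
qed

(* What the argument needs to know about \<tau>hco, abstracted so that it applies both to
   f \<mapsto> (dom f, f) and to f \<mapsto> (im f, f^-1). *)
locale partial_map_family =
  fixes X :: "'a topology" and T :: "'b topology" and G :: "'b set"
    and dm :: "'b \<Rightarrow> 'a set" and ap :: "'b \<Rightarrow> 'a \<Rightarrow> 'a"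
  assumes locally_compact: "locally_compact_space X"
    and Hausdorff: "Hausdorff_space X"
    and openin_dm: "h \<in> G \<Longrightarrow> openin X (dm h)"
    and continuous_ap: "h \<in> G \<Longrightarrow> continuous_map (subtopology X (dm h)) X (ap h)"
    and topspace_subset: "topspace T \<subseteq> G"
    and openin_compact_open:
      "compactin X K \<Longrightarrow> openin X V \<Longrightarrow> openin T {h\<in>G. K \<subseteq> dm h \<and> ap h ` K \<subseteq> V}"
    and openin_not_covering: "openin X U \<Longrightarrow> openin T {h\<in>G. \<not> U \<subseteq> dm h}"
begin

lemma ap_in_topspace:
  assumes "h \<in> G" "x \<in> dm h"
  shows "ap h x \<in> topspace X"
  using continuous_map_image_subset_topspace[OF continuous_ap[OF assms(1)]]
    openin_subset[OF openin_dm[OF assms(1)]] assms(2)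
  by auto

lemma closure_of_compact_open_subset:
  assumes U: "openin X U" "K \<subseteq> U" and W: "openin X W" "X closure_of W \<subseteq> V"
  shows "T closure_of {h\<in>G. X closure_of U \<subseteq> dm h \<and> ap h ` (X closure_of U) \<subseteq> W}
      \<subseteq> {h\<in>G. K \<subseteq> dm h \<and> ap h ` K \<subseteq> V}"
    (is "T closure_of ?N \<subseteq> _")
proof (rule closure_of_subsetI)
  have U_closure: "U \<subseteq> X closure_of U" and W_closure: "W \<subseteq> X closure_of W"
    by (simp_all add: U(1) W(1) closure_of_subset openin_subset)
  fix g assume "g \<in> topspace T" "g \<notin> {h\<in>G. K \<subseteq> dm h \<and> ap h ` K \<subseteq> V}"
  then have g: "g \<in> G" "\<not> (K \<subseteq> dm g \<and> ap g ` K \<subseteq> V)"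
    using topspace_subset by auto
  show "\<exists>M. openin T M \<and> g \<in> M \<and> M \<inter> ?N = {}"
  proof (cases "K \<subseteq> dm g")
    case False
    then have "g \<in> {h\<in>G. \<not> U \<subseteq> dm h}"
      using g(1) U(2) by blast
    moreover have "{h\<in>G. \<not> U \<subseteq> dm h} \<inter> ?N = {}"
      using U_closure by blast
    ultimately show ?thesis
      using openin_not_covering[OF U(1)] by blast
  next
    case True
    then obtain x where x: "x \<in> K" "x \<in> dm g" "ap g x \<notin> V"
      using g(2) by blast
    have "x \<in> topspace X"
      using x(1) U openin_subset by blast
    define M where "M = {h\<in>G. {x} \<subseteq> dm h \<and> ap h ` {x} \<subseteq> topspace X - X closure_of W}"
    have "openin T M"
      unfolding M_def using \<open>x \<in> topspace X\<close>
      by (intro openin_compact_open) (simp_all add: openin_diff)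
    moreover have "g \<in> M"
      unfolding M_def using g(1) x W(2) ap_in_topspace by auto
    moreover have "M \<inter> ?N = {}"
      \<comment> \<open>members of ?N map x \<in> cl U into W \<subseteq> cl W\<close>
      unfolding M_def using x(1) U(2) U_closure W_closure by blast
    ultimately show ?thesis
      by blast
  qed
qed

lemma closed_nbhds_in_compact_open:
  assumes K: "compactin X K" and V: "openin X V"
  shows "closed_nbhds_in T {h\<in>G. K \<subseteq> dm h \<and> ap h ` K \<subseteq> V}"
  unfolding closed_nbhds_in_def
proof
  fix f assume "f \<in> {h\<in>G. K \<subseteq> dm h \<and> ap h ` K \<subseteq> V}"
  then have f: "f \<in> G" "K \<subseteq> dm f" "ap f ` K \<subseteq> V"
    by auto
  have "compactin X (ap f ` K)"
    using image_compactin[OF _ continuous_ap[OF f(1)]] K f(2) by (simp add: compactin_subtopology)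
  then obtain W where W: "openin X W" "ap f ` K \<subseteq> W" "compactin X (X closure_of W)"
      "X closure_of W \<subseteq> V"
    by (rule locally_compact_Hausdorff_compact_closure_nbhd[OF locally_compact Hausdorff _ V f(3)])
  have "openin X {x \<in> dm f. ap f x \<in> W}"
    using openin_continuous_map_preimage[OF continuous_ap[OF f(1)] W(1)]
      openin_open_subtopology[OF openin_dm[OF f(1)]] openin_subset[OF openin_dm[OF f(1)]]
    by (simp add: Int_absorb1)
  moreover have "K \<subseteq> {x \<in> dm f. ap f x \<in> W}"
    using f(2) W(2) by auto
  ultimately obtain U where U: "openin X U" "K \<subseteq> U" "compactin X (X closure_of U)"
      "X closure_of U \<subseteq> {x \<in> dm f. ap f x \<in> W}"
    by (rule locally_compact_Hausdorff_compact_closure_nbhd[OF locally_compact Hausdorff K])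
  define N where "N = {h\<in>G. X closure_of U \<subseteq> dm h \<and> ap h ` (X closure_of U) \<subseteq> W}"
  have "openin T N"
    unfolding N_def using openin_compact_open U(3) W(1) by blast
  moreover have "f \<in> N"
    unfolding N_def using f(1) U(4) by auto
  moreover have "T closure_of N \<subseteq> {h\<in>G. K \<subseteq> dm h \<and> ap h ` K \<subseteq> V}"
    unfolding N_def using closure_of_compact_open_subset U(1,2) W(1,4) .
  ultimately show "\<exists>N. openin T N \<and> f \<in> N \<and> T closure_of N \<subseteq> {h\<in>G. K \<subseteq> dm h \<and> ap h ` K \<subseteq> V}"
    by blast
qed

lemma closure_of_not_covering_subset:
  assumes U: "openin X U" "compactin X (X closure_of U)" "X closure_of U \<subseteq> V"
  shows "T closure_of {h\<in>G. \<not> U \<subseteq> dm h} \<subseteq> {h\<in>G. \<not> V \<subseteq> dm h}"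
proof (rule closure_of_subsetI)
  fix g assume "g \<in> topspace T" "g \<notin> {h\<in>G. \<not> V \<subseteq> dm h}"
  then have g: "g \<in> G" "V \<subseteq> dm g"
    using topspace_subset by auto
  define M where "M = {h\<in>G. X closure_of U \<subseteq> dm h \<and> ap h ` (X closure_of U) \<subseteq> topspace X}"
  have "openin T M"
    unfolding M_def using openin_compact_open U(2) by blast
  moreover have "g \<in> M"
    unfolding M_def using g U(3) ap_in_topspace by blast
  moreover have "M \<inter> {h\<in>G. \<not> U \<subseteq> dm h} = {}"
    unfolding M_def using closure_of_subset[OF openin_subset[OF U(1)]] by blast
  ultimately show "\<exists>M. openin T M \<and> g \<in> M \<and> M \<inter> {h\<in>G. \<not> U \<subseteq> dm h} = {}"
    by blast
qed

lemma closed_nbhds_in_not_covering: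
  assumes V: "openin X V"
  shows "closed_nbhds_in T {h\<in>G. \<not> V \<subseteq> dm h}"
  unfolding closed_nbhds_in_def
proof
  fix f assume "f \<in> {h\<in>G. \<not> V \<subseteq> dm h}"
  then obtain x where f: "f \<in> G" and x: "x \<in> V" "x \<notin> dm f"
    by blast
  have "compactin X {x}"
    using x(1) V openin_subset by auto
  then obtain U where U: "openin X U" "x \<in> U" "compactin X (X closure_of U)" "X closure_of U \<subseteq> V"
    using locally_compact_Hausdorff_compact_closure_nbhd[OF locally_compact Hausdorff _ V] x(1)
    by (metis empty_subsetI insert_subset)
  then have "openin T {h\<in>G. \<not> U \<subseteq> dm h}" "f \<in> {h\<in>G. \<not> U \<subseteq> dm h}"
    using openin_not_covering f x by blast+
  with closure_of_not_covering_subset[OF U(1,3,4)]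
  show "\<exists>N. openin T N \<and> f \<in> N \<and> T closure_of N \<subseteq> {h\<in>G. \<not> V \<subseteq> dm h}"
    by blast
qed

lemma closed_nbhds_in_fell:
  assumes "openin (fell_topology X) W"
  shows "closed_nbhds_in T {h\<in>G. topspace X - dm h \<in> W}"
  using _ assms unfolding fell_topology_def
proof (rule closed_nbhds_in_preimage_generated)
  have closed_complement: "topspace X - dm h \<in> CLs X" if "h \<in> G" for h
    using openin_dm[OF that] by (simp add: CLs_def closedin_diff)
  fix s assume "s \<in> {{A \<in> CLs X. A \<subseteq> topspace X - K} | K. compactin X K} \<union>
      {{A \<in> CLs X. A \<inter> V \<noteq> {}} | V. openin X V \<and> V \<noteq> {}}"
  then consider K where "compactin X K" "s = {A \<in> CLs X. A \<subseteq> topspace X - K}"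
    | V where "openin X V" "s = {A \<in> CLs X. A \<inter> V \<noteq> {}}"
    by blast
  then show "closed_nbhds_in T {h\<in>G. topspace X - dm h \<in> s}"
  proof cases
    case 1
    then have "K \<subseteq> topspace X"
      by (simp add: compactin_subset_topspace)
    with 1 closed_complement ap_in_topspace
    have "{h\<in>G. topspace X - dm h \<in> s} = {h\<in>G. K \<subseteq> dm h \<and> ap h ` K \<subseteq> topspace X}"
      by auto
    with 1 show ?thesis
      by (simp add: closed_nbhds_in_compact_open)
  next
    case 2
    then have "V \<subseteq> topspace X"
      by (simp add: openin_subset)
    with 2 closed_complement have "{h\<in>G. topspace X - dm h \<in> s} = {h\<in>G. \<not> V \<subseteq> dm h}"
      by auto
    with 2 show ?thesis
      by (simp add: closed_nbhds_in_not_covering)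
  qed
qed

end

lemma Gamma_openin_dom: "f \<in> Gamma X \<Longrightarrow> openin X (dom f)"
  by (simp add: Gamma_def)

lemma Gamma_openin_ran: "f \<in> Gamma X \<Longrightarrow> openin X (ran f)"
  by (simp add: Gamma_def)

lemma Gamma_homeomorphic_map:
  "f \<in> Gamma X \<Longrightarrow>
    homeomorphic_map (subtopology X (dom f)) (subtopology X (ran f)) (\<lambda>x. the (f x))"
  by (simp add: Gamma_def)

lemma Gamma_continuous_map:
  "f \<in> Gamma X \<Longrightarrow> continuous_map (subtopology X (dom f)) X (\<lambda>x. the (f x))"
  using Gamma_homeomorphic_map homeomorphic_imp_continuous_map continuous_map_into_fulltopology
  by blast

definition pinv :: "('a \<Rightarrow> 'a option) \<Rightarrow> 'a \<Rightarrow> 'a" where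
  "pinv f = inv_into (dom f) (\<lambda>x. the (f x))"

lemma image_dom_the: "(\<lambda>x. the (f x)) ` dom f = ran f"
  by (force simp: ran_def dom_def)

lemma the_in_ran: "x \<in> dom f \<Longrightarrow> the (f x) \<in> ran f"
  by (auto simp: ran_def)

lemma pinv_in_dom: "y \<in> ran f \<Longrightarrow> pinv f y \<in> dom f"
  unfolding pinv_def by (metis image_dom_the inv_into_into)

lemma the_pinv: "y \<in> ran f \<Longrightarrow> the (f (pinv f y)) = y"
  unfolding pinv_def by (metis image_dom_the f_inv_into_f)

lemma Gamma_pinv_the:
  assumes "f \<in> Gamma X" "x \<in> dom f"
  shows "pinv f (the (f x)) = x"
proof -
  have "inj_on (\<lambda>x. the (f x)) (dom f)"
    using homeomorphic_imp_injective_map[OF Gamma_homeomorphic_map[OF assms(1)]]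
      openin_subset[OF Gamma_openin_dom[OF assms(1)]]
    by (simp add: Int_absorb1)
  then show ?thesis
    unfolding pinv_def using assms(2) by (rule inv_into_f_f)
qed

lemma Gamma_continuous_map_pinv:
  assumes f: "f \<in> Gamma X"
  shows "continuous_map (subtopology X (ran f)) X (pinv f)"
proof -
  have "dom f \<subseteq> topspace X" "ran f \<subseteq> topspace X"
    using f Gamma_openin_dom Gamma_openin_ran openin_subset by blast+
  have "open_map (subtopology X (dom f)) (subtopology X (ran f)) (\<lambda>x. the (f x)) \<longleftrightarrow>
      continuous_map (subtopology X (ran f)) (subtopology X (dom f)) (pinv f)"
  proof (rule open_eq_continuous_inverse_map)
    fix x assume "x \<in> topspace (subtopology X (dom f))"
    then have "x \<in> dom f"
      by simp
    then show "the (f x) \<in> topspace (subtopology X (ran f)) \<and> pinv f (the (f x)) = x"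
      using \<open>ran f \<subseteq> topspace X\<close> the_in_ran[of x f] Gamma_pinv_the[OF f] by auto
  next
    fix y assume "y \<in> topspace (subtopology X (ran f))"
    then have "y \<in> ran f"
      by simp
    then show "pinv f y \<in> topspace (subtopology X (dom f)) \<and> the (f (pinv f y)) = y"
      using \<open>dom f \<subseteq> topspace X\<close> pinv_in_dom[of y f] the_pinv[of y f] by auto
  qed
  then have "continuous_map (subtopology X (ran f)) (subtopology X (dom f)) (pinv f)"
    using Gamma_homeomorphic_map[OF f] homeomorphic_imp_open_map by blast
  then show ?thesis
    using continuous_map_into_fulltopology by blast
qed

lemma Gamma_ppre_eq_image_pinv:
  assumes f: "f \<in> Gamma X" and K: "K \<subseteq> ran f"
  shows "ppre f K = pinv f ` K"
proof
  show "ppre f K \<subseteq> pinv f ` K"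
  proof
    fix x assume "x \<in> ppre f K"
    then have "x \<in> dom f" "the (f x) \<in> K"
      by (auto simp: ppre_def)
    then show "x \<in> pinv f ` K"
      using Gamma_pinv_the[OF f] by (metis image_eqI)
  qed
  show "pinv f ` K \<subseteq> ppre f K"
  proof
    fix x assume "x \<in> pinv f ` K"
    then obtain y where "y \<in> K" "x = pinv f y"
      by blast
    with K show "x \<in> ppre f K"
      unfolding ppre_def using pinv_in_dom[of y f] the_pinv[of y f] by auto
  qed
qed

lemma Gamma_ppre_compact_open_eq:
  "{f\<in>Gamma X. K \<subseteq> ran f \<and> ppre f K \<subseteq> V} = {f\<in>Gamma X. K \<subseteq> ran f \<and> pinv f ` K \<subseteq> V}"
  using Gamma_ppre_eq_image_pinv by blast

lemma topspace_hco_topology: "topspace (hco_topology X) \<subseteq> Gamma X"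
  unfolding hco_topology_def topology_generated_by_topspace
  by (auto simp: hco_subbasis_def)

lemma openin_hco_topology_subbasis: "s \<in> hco_subbasis X \<Longrightarrow> openin (hco_topology X) s"
  by (simp add: hco_topology_def topology_generated_by_Basis)

lemma openin_fell_topology_hitting:
  "openin X V \<Longrightarrow> V \<noteq> {} \<Longrightarrow> openin (fell_topology X) {A \<in> CLs X. A \<inter> V \<noteq> {}}"
  unfolding fell_topology_def by (rule topology_generated_by_Basis) blast

lemma openin_hco_compact_open_dom:
  assumes "compactin X K" "openin X V"
  shows "openin (hco_topology X) {f\<in>Gamma X. K \<subseteq> dom f \<and> (\<lambda>x. the (f x)) ` K \<subseteq> V}"
proof -
  have "{f\<in>Gamma X. K \<subseteq> dom f \<and> pimg f K \<subseteq> V} \<in> hco_subbasis X"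
    unfolding hco_subbasis_def
    by (rule UnI1, rule UnI1, rule UnI1, rule CollectI, rule exI[of _ K], rule exI[of _ V])
      (simp add: assms)
  then show ?thesis
    unfolding pimg_def by (rule openin_hco_topology_subbasis)
qed

lemma openin_hco_compact_open_ran:
  assumes "compactin X K" "openin X V"
  shows "openin (hco_topology X) {f\<in>Gamma X. K \<subseteq> ran f \<and> pinv f ` K \<subseteq> V}"
proof -
  have "{f\<in>Gamma X. K \<subseteq> ran f \<and> ppre f K \<subseteq> V} \<in> hco_subbasis X"
    unfolding hco_subbasis_def
    by (rule UnI1, rule UnI1, rule UnI2, rule CollectI, rule exI[of _ K], rule exI[of _ V])
      (simp add: assms)
  then show ?thesis
    unfolding Gamma_ppre_compact_open_eq by (rule openin_hco_topology_subbasis)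
qed

lemma openin_hco_not_covering_dom:
  assumes U: "openin X U"
  shows "openin (hco_topology X) {f\<in>Gamma X. \<not> U \<subseteq> dom f}"
proof (cases "U = {}")
  case False
  have "{f\<in>Gamma X. \<not> U \<subseteq> dom f} = {f\<in>Gamma X. Dom_c X f \<in> {A \<in> CLs X. A \<inter> U \<noteq> {}}}"
    using openin_subset[OF U] Gamma_openin_dom by (auto simp: Dom_c_def CLs_def closedin_diff)
  also have "\<dots> \<in> hco_subbasis X"
    unfolding hco_subbasis_def
    by (rule UnI1, rule UnI2, rule CollectI, rule exI, rule conjI[OF refl])
      (rule openin_fell_topology_hitting[OF U False])
  finally show ?thesis
    by (rule openin_hco_topology_subbasis)
qed simp

lemma openin_hco_not_covering_ran:
  assumes U: "openin X U"
  shows "openin (hco_topology X) {f\<in>Gamma X. \<not> U \<subseteq> ran f}"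
proof (cases "U = {}")
  case False
  have "{f\<in>Gamma X. \<not> U \<subseteq> ran f} = {f\<in>Gamma X. Im_c X f \<in> {A \<in> CLs X. A \<inter> U \<noteq> {}}}"
    using openin_subset[OF U] Gamma_openin_ran by (auto simp: Im_c_def CLs_def closedin_diff)
  also have "\<dots> \<in> hco_subbasis X"
    unfolding hco_subbasis_def
    by (rule UnI2, rule CollectI, rule exI, rule conjI[OF refl])
      (rule openin_fell_topology_hitting[OF U False])
  finally show ?thesis
    by (rule openin_hco_topology_subbasis)
qed simp

lemma partial_map_family_dom:
  assumes "locally_compact_space X" "Hausdorff_space X"
  shows "partial_map_family X (hco_topology X) (Gamma X) dom (\<lambda>f x. the (f x))"
  using assms
  by unfold_locales
    (simp_all add: Gamma_openin_dom Gamma_continuous_map topspace_hco_topology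
      openin_hco_compact_open_dom openin_hco_not_covering_dom)

lemma partial_map_family_ran:
  assumes "locally_compact_space X" "Hausdorff_space X"
  shows "partial_map_family X (hco_topology X) (Gamma X) ran pinv"
  using assms
  by unfold_locales
    (simp_all add: Gamma_openin_ran Gamma_continuous_map_pinv topspace_hco_topology
      openin_hco_compact_open_ran openin_hco_not_covering_ran)

lemma hco_subbasis_closed_nbhds_in:
  assumes "locally_compact_space X" "Hausdorff_space X" and s: "s \<in> hco_subbasis X"
  shows "closed_nbhds_in (hco_topology X) s"
proof -
  interpret dom: partial_map_family X "hco_topology X" "Gamma X" dom "\<lambda>f x. the (f x)"
    using partial_map_family_dom[OF assms(1,2)] .
  interpret ran: partial_map_family X "hco_topology X" "Gamma X" ran pinv
    using partial_map_family_ran[OF assms(1,2)] .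
  have compact_open_dom: "closed_nbhds_in (hco_topology X) {f\<in>Gamma X. K \<subseteq> dom f \<and> pimg f K \<subseteq> V}"
    if "compactin X K" "openin X V" for K V
    unfolding pimg_def using that by (rule dom.closed_nbhds_in_compact_open)
  have compact_open_ran: "closed_nbhds_in (hco_topology X) {f\<in>Gamma X. K \<subseteq> ran f \<and> ppre f K \<subseteq> V}"
    if "compactin X K" "openin X V" for K V
    unfolding Gamma_ppre_compact_open_eq using that by (rule ran.closed_nbhds_in_compact_open)
  have fell_dom: "closed_nbhds_in (hco_topology X) {f\<in>Gamma X. Dom_c X f \<in> W}"
    if "openin (fell_topology X) W" for W
    unfolding Dom_c_def using that by (rule dom.closed_nbhds_in_fell)
  have fell_ran: "closed_nbhds_in (hco_topology X) {f\<in>Gamma X. Im_c X f \<in> W}"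
    if "openin (fell_topology X) W" for W
    unfolding Im_c_def using that by (rule ran.closed_nbhds_in_fell)
  from s show ?thesis
    unfolding hco_subbasis_def
    by (elim UnE CollectE exE conjE) (simp_all add: compact_open_dom compact_open_ran fell_dom fell_ran)
qed

theorem mainTheorem2:
  fixes X :: "'a topology"
  assumes "locally_compact_space X" and "Hausdorff_space X"
  shows "regular_space (hco_topology X)"
  using hco_subbasis_closed_nbhds_in[OF assms] unfolding hco_topology_def
  by (rule regular_space_topology_generated_by)

end
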